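(* Let $n,m_1,m_2$ be nonnegative integers. Let $B_1(m_1,m_2,n)$ be the number of partitions of $n$ into parts congruent to $0,2,3,$ or $4\pmod 6$ having exactly $m_1$ parts congruent to $2\pmod 6$ and exactly $m_2$ parts congruent to $4\pmod 6$. Let $B_2(m_1,m_2,n)$ be the number of partitions of $n$ in which no two consecutive integers both appear as parts and all parts are at least $2$, having exactly $m_2$ parts congruent to $1\pmod 3$ and exactly $m_1$ parts congruent to $2\pmod 3$. Then $B_1(m_1,m_2,n)=B_2(m_1,m_2,n)$. Equivalently, if $\Lambda$ denotes the set of partitions with no part equal to $1$ in which no two consecutive integers both appear as parts, and $\#_{1,3}(\lambda)$, $\#_{2,3}(\lambda)$ denote the numbers of parts of $\lambda$ congruent to $1$ and $2\pmod 3$ respectively (counted with multiplicity), then as formal power series $$\sum_{\lambda\in\Lambda}A^{\#_{2,3}(\lambda)}C^{\#_{1,3}(\lambda)}q^{|\lambda|}=\frac{1}{(q^3;q^3)_\infty\,(Aq^2;q^6)_\infty\,(Cq^4;q^6)_\infty}.$$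
   Context: $|\lambda|$ is the sum of the parts of $\lambda$. Standard $q$-Pochhammer notation: $(a;q)_\infty=\prod_{j\ge0}(1-aq^j)$. Numbers of parts in a given residue class are counted with multiplicity. *)

theory Defs
  imports Main "HOL-Library.Multiset"
begin

definition partitions :: "nat \<Rightarrow> nat multiset set" where
  "partitions n = {p. (\<forall>x\<in>#p. 0 < x) \<and> sum_mset p = n}"

definition nparts_mod :: "nat \<Rightarrow> nat \<Rightarrow> nat multiset \<Rightarrow> nat" where
  "nparts_mod r m p = size (filter_mset (\<lambda>x. x mod m = r) p)"

definition B1 :: "nat \<Rightarrow> nat \<Rightarrow> nat \<Rightarrow> nat" where
  "B1 m1 m2 n = card {p \<in> partitions n.
      (\<forall>x\<in>#p. x mod 6 \<in> {0, 2, 3, 4}) \<and>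
      nparts_mod 2 6 p = m1 \<and> nparts_mod 4 6 p = m2}"

definition B2 :: "nat \<Rightarrow> nat \<Rightarrow> nat \<Rightarrow> nat" where
  "B2 m1 m2 n = card {p \<in> partitions n.
      (\<forall>x\<in>#p. 2 \<le> x) \<and> (\<forall>x\<in>#p. x + 1 \<notin># p) \<and>
      nparts_mod 1 3 p = m2 \<and> nparts_mod 2 3 p = m1}"

end

theory Submission
  imports Defs
begin

text \<open>Write a partition in \<open>\<Lambda>\<close> of \<open>n\<close> as a weakly decreasing list \<open>l\<close> of length \<open>n\<close>,
  padded with zeros. Such lists are exactly the lists \<open>l\<^sub>i = 2\<kappa>\<^sub>i + 3s\<^sub>i\<close> with \<open>s\<close>
  weakly decreasing, \<open>r\<close> a word over \<open>{0, 1, 2}\<close> and \<open>\<kappa>\<^sub>i = r\<^sub>i + 3\<close> times the number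
  of ascents of \<open>r\<close> from position \<open>i\<close> on, and \<open>(r, s)\<close> is unique: \<open>2(\<kappa>\<^sub>i - \<kappa>\<^sub>i\<^sub>+\<^sub>1) \<in> {0, 2, 4}\<close>
  is determined by the gap \<open>l\<^sub>i - l\<^sub>i\<^sub>+\<^sub>1\<close> modulo 3, and a gap 1 would need \<open>s\<^sub>i < s\<^sub>i\<^sub>+\<^sub>1\<close>.
  Since \<open>l\<^sub>i \<equiv> 2r\<^sub>i (mod 3)\<close>, the letters 1 and 2 of \<open>r\<close> mark the parts of \<open>l\<close> that are
  \<open>\<equiv> 2\<close> and \<open>\<equiv> 1 (mod 3)\<close>.

  A MacMahon-type bijection, reading \<open>r\<close> backwards and turning its descents into increments
  of 3, sends \<open>r\<close> to a partition \<open>\<pi>\<close> into parts prime to 3 with \<open>|\<pi>| = \<Sum>\<kappa>\<close>, whose parts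
  have the residues of the nonzero letters of \<open>r\<close>. So \<open>l \<mapsto> (\<pi>, s)\<close> is a bijection onto the
  pairs with \<open>2|\<pi>| + 3|s| = n\<close>, and \<open>(\<pi>, s) \<mapsto> 2\<pi> \<union> 3s\<close> is a bijection onto the
  partitions counted by \<open>B\<^sub>1\<close>, keeping track of the residues throughout.\<close>

section \<open>Residue words and partitions into parts prime to 3\<close>

fun above_head :: "nat \<Rightarrow> nat list \<Rightarrow> bool" where
  "above_head x (y # _) = (y < x)"
| "above_head x [] = False"

fun descent_weight :: "nat list \<Rightarrow> nat" where
  "descent_weight [] = 0"
| "descent_weight (x # w) = (if above_head x w then length w else 0) + descent_weight w"

fun position_weight :: "nat list \<Rightarrow> nat" where
  "position_weight [] = 0"
| "position_weight (f # p) = f * Suc (length p) + position_weight p"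

text \<open>A word \<open>U\<close> over \<open>{1, 2}\<close> and a list \<open>p\<close> of increments determine the increasing
  list of parts with residues \<open>U\<close> mod 3; each descent of \<open>U\<close> costs an extra step of 3.\<close>

fun assemble :: "nat list \<Rightarrow> nat list \<Rightarrow> nat list" where
  "assemble (x # U) (f # p) = (x + 3*f) # map (\<lambda>v. v + 3*(f + (if above_head x U then 1 else 0))) (assemble U p)"
| "assemble _ _ = []"

function disassemble :: "nat list \<Rightarrow> nat list \<times> nat list" where
  "disassemble [] = ([], [])"
| "disassemble (v # vs) = (let u = v mod 3; f = v div 3;
      d = (if above_head u (map (\<lambda>y. y mod 3) vs) then 1 else 0);
      r = disassemble (map (\<lambda>y. y - 3*(f + d)) vs) in (u # fst r, f # snd r))"
  by pat_completeness auto
termination by (relation "measure length") auto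

lemma map_mod3_add_mult3: "map (\<lambda>v. v mod 3) (map (\<lambda>v. v + 3*(c::nat)) L) = map (\<lambda>v. v mod 3) L"
  by (induction L) auto

lemma sum_list_map_add_const: "sum_list (map (\<lambda>v. v + (c::nat)) L) = sum_list L + length L * c"
  by (induction L) auto

lemma mod3_diff_mult3: "3*k \<le> (z::nat) \<Longrightarrow> (z - 3*k) mod 3 = z mod 3"
proof -
  assume "3*k \<le> z"
  then obtain w where "z = w + 3*k" by (metis le_add_diff_inverse2)
  then show ?thesis by simp
qed

lemma sorted_map_diff: "sorted xs \<Longrightarrow> sorted (map (\<lambda>y. y - (c::nat)) xs)"
  by (induction xs) (auto intro: diff_le_mono)

lemma length_assemble: "length p = length U \<Longrightarrow> length (assemble U p) = length U"
  by (induction U p rule: assemble.induct) auto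

lemma residues_assemble: "set U \<subseteq> {1,2} \<Longrightarrow> length p = length U \<Longrightarrow> map (\<lambda>v. v mod 3) (assemble U p) = U"
proof (induction U p rule: assemble.induct)
  case (1 x U f p)
  have "map (\<lambda>v. v mod 3) (map (\<lambda>v. v + 3*(f + (if above_head x U then 1 else 0))) (assemble U p))
        = map (\<lambda>v. v mod 3) (assemble U p)" by (rule map_mod3_add_mult3)
  moreover have "x mod 3 = x" using 1(2) by auto
  ultimately show ?case using 1 by (simp del: map_map)
qed auto

lemma hd_le_assemble: "set U \<subseteq> {1,2} \<Longrightarrow> length p = length U \<Longrightarrow> v \<in> set (assemble U p) \<Longrightarrow> hd U \<le> v"
proof (induction U p arbitrary: v rule: assemble.induct)
  case (1 x U f p)
  show ?case
  proof (cases "v = x + 3*f")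
    case True then show ?thesis by simp
  next
    case False
    then obtain v' where v': "v' \<in> set (assemble U p)" "v = v' + 3*(f + (if above_head x U then 1 else 0))"
      using 1(4) by auto
    show ?thesis
    proof (cases "above_head x U")
      case True
      then show ?thesis using v' 1(2) by auto
    next
      case False
      have "hd U \<le> v'" using 1 v' by auto
      moreover have "U \<noteq> []" using v' by (cases U; cases p) auto
      then have "x \<le> hd U" using False by (cases U) auto
      ultimately show ?thesis using v' by simp
    qed
  qed
qed auto

lemma sorted_assemble: "set U \<subseteq> {1,2} \<Longrightarrow> length p = length U \<Longrightarrow> sorted (assemble U p)"
proof (induction U p rule: assemble.induct)
  case (1 x U f p)
  have s: "sorted (assemble U p)" using 1 by auto
  have "\<forall>v\<in>set (assemble U p). x + 3*f \<le> v + 3*(f + (if above_head x U then 1 else 0))"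
  proof
    fix v assume v: "v \<in> set (assemble U p)"
    show "x + 3*f \<le> v + 3*(f + (if above_head x U then 1 else 0))"
    proof (cases "above_head x U")
      case True then show ?thesis using 1(2) by auto
    next
      case False
      have "hd U \<le> v" using hd_le_assemble[of U p v] 1 v by auto
      moreover have "U \<noteq> []" using v by (cases U; cases p) auto
      then have "x \<le> hd U" using False by (cases U) auto
      ultimately show ?thesis using False by simp
    qed
  qed
  then show ?case using s by (auto simp: sorted_map)
qed auto

lemma sum_assemble: "length p = length U \<Longrightarrow> sum_list (assemble U p) = sum_list U + 3 * (descent_weight U + position_weight p)"
proof (induction U p rule: assemble.induct)
  case (1 x U f p)
  have l: "length (assemble U p) = length U" using 1 by (simp add: length_assemble)
  have "sum_list (map (\<lambda>v. v + 3*(f + (if above_head x U then 1 else 0))) (assemble U p))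
      = sum_list (assemble U p) + length (assemble U p) * (3*(f + (if above_head x U then 1 else 0)))"
    by (rule sum_list_map_add_const)
  moreover have "descent_weight (x # U) = (if above_head x U then length U else 0) + descent_weight U" by simp
  moreover have "position_weight (f # p) = f * Suc (length p) + position_weight p" by simp
  ultimately show ?case using 1 l by (cases "above_head x U") (simp_all add: algebra_simps)
qed auto

lemma disassemble_assemble: "set U \<subseteq> {1,2} \<Longrightarrow> length p = length U \<Longrightarrow> disassemble (assemble U p) = (U, p)"
proof (induction U p rule: assemble.induct)
  case (1 x U f p)
  let ?c = "3*(f + (if above_head x U then 1 else 0))"
  have x: "x \<in> {1,2}" using 1 by auto
  have m: "map (\<lambda>y. y mod 3) (map (\<lambda>v. v + ?c) (assemble U p)) = U"
    using residues_assemble[of U p] 1 map_mod3_add_mult3[of "f + (if above_head x U then 1 else 0)" "assemble U p"] by simp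
  have xm: "(x + 3*f) mod 3 = x" "(x + 3*f) div 3 = f" using x by auto
  have mm: "map (\<lambda>y. y - ?c) (map (\<lambda>v. v + ?c) (assemble U p)) = assemble U p" by (simp add: comp_def)
  show ?case using 1 m xm mm by (simp add: Let_def del: map_map)
qed auto

lemma div3_less_if_mod3_greater: "(v::nat) \<le> y \<Longrightarrow> y mod 3 < v mod 3 \<Longrightarrow> v div 3 < y div 3"
  using div_mult_mod_eq[of v 3] div_mult_mod_eq[of y 3] by linarith

lemma assemble_disassemble:
  "sorted vs \<Longrightarrow> (\<forall>v\<in>set vs. v mod 3 \<noteq> 0) \<Longrightarrow> disassemble vs = (U, p) \<Longrightarrow>
    assemble U p = vs \<and> set U \<subseteq> {1,2} \<and> length p = length U"
proof (induction vs arbitrary: U p rule: disassemble.induct)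
  case (2 v vs)
  define u where "u = v mod 3"
  define f where "f = v div 3"
  define d where "d = (if above_head u (map (\<lambda>y. y mod 3) vs) then 1 else (0::nat))"
  define vs' where "vs' = map (\<lambda>y. y - 3*(f + d)) vs"
  have shift_le: "3*(f + d) \<le> y" if y: "y \<in> set vs" for y
  proof (cases "d = 1")
    case True
    then obtain y0 ys where vs: "vs = y0 # ys" "y0 mod 3 < u"
      unfolding d_def by (cases vs) (auto split: if_splits)
    have "v \<le> y0" "y0 \<le> y" using "2.prems"(1) vs y by auto
    then have "f < y0 div 3"
      using div3_less_if_mod3_greater vs(2) unfolding u_def f_def by blast
    then have "3*(f + 1) \<le> 3*(y0 div 3)" by simp
    also have "\<dots> \<le> y" using \<open>y0 \<le> y\<close> times_div_less_eq_dividend[of 3 y0] by linarith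
    finally show ?thesis using True by simp
  next
    case False
    then show ?thesis
      using "2.prems"(1) y times_div_less_eq_dividend[of 3 v] unfolding d_def f_def by auto
  qed
  have residues_vs': "map (\<lambda>y. y mod 3) vs' = map (\<lambda>y. y mod 3) vs"
    using shift_le unfolding vs'_def
  proof (induction vs)
    case (Cons y vs)
    then show ?case using mod3_diff_mult3[of "f + d" y] by auto
  qed simp
  have vs: "map (\<lambda>y. y + 3*(f + d)) vs' = vs"
    using shift_le unfolding vs'_def by (induction vs) auto
  have "sorted vs'"
    using "2.prems"(1) unfolding vs'_def by (intro sorted_map_diff) simp
  moreover have "\<forall>y\<in>set vs'. y mod 3 \<noteq> 0"
  proof -
    have "0 \<notin> set (map (\<lambda>y. y mod 3) vs')" using "2.prems"(2) residues_vs' by auto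
    then show ?thesis by (metis image_eqI set_map)
  qed
  moreover obtain U' p' where vs'_dis: "disassemble vs' = (U', p')" by (cases "disassemble vs'")
  ultimately have IH: "assemble U' p' = vs' \<and> set U' \<subseteq> {1,2} \<and> length p' = length U'"
    using "2.IH"[OF u_def f_def d_def, folded vs'_def] by auto
  then have "U' = map (\<lambda>y. y mod 3) vs" using residues_assemble residues_vs' by metis
  moreover have "U = u # U'" "p = f # p'"
    using "2.prems"(3) vs'_dis by (simp_all add: u_def f_def d_def vs'_def Let_def)
  moreover have "u \<in> {1,2}" "u + 3*f = v" using "2.prems"(2) unfolding u_def f_def by auto
  ultimately show ?case using IH vs by (simp add: d_def)
qed simp

text \<open>Inserting \<open>gs\<^sub>i\<close> zeros after the \<open>i\<close>-th letter of \<open>U\<close> raises the descent weight by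
  \<open>position_weight (gaps_to_incs U gs)\<close>, and \<open>gaps_to_incs U\<close> is a sum-preserving bijection.\<close>

fun gaps_to_incs :: "nat list \<Rightarrow> nat list \<Rightarrow> nat list" where
  "gaps_to_incs (x # U) (g # gs) = (let ph = gaps_to_incs U gs in
     if above_head x U then ph @ [g]
     else if g = 0 then 0 # ph
     else if ph = [] then [g]
     else (hd ph + 1) # tl ph @ [g - 1])"
| "gaps_to_incs _ _ = []"

fun incs_to_gaps :: "nat list \<Rightarrow> nat list \<Rightarrow> nat list" where
  "incs_to_gaps (x # U) p = (if above_head x U then last p # incs_to_gaps U (butlast p)
     else if hd p = 0 then 0 # incs_to_gaps U (tl p)
     else if U = [] then [hd p]
     else (last p + 1) # incs_to_gaps U ((hd p - 1) # butlast (tl p)))"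
| "incs_to_gaps [] p = []"

lemma above_head_0 [simp]: "above_head 0 w = False"
  by (cases w) auto

lemma length_gaps_to_incs: "length gs = length U \<Longrightarrow> length (gaps_to_incs U gs) = length U"
proof (induction U gs rule: gaps_to_incs.induct)
  case (1 x U g gs)
  then have l: "length (gaps_to_incs U gs) = length U" by simp
  show ?case
  proof (cases "\<not> above_head x U \<and> g \<noteq> 0 \<and> gaps_to_incs U gs \<noteq> []")
    case True
    then obtain a t where "gaps_to_incs U gs = a # t" by (cases "gaps_to_incs U gs") auto
    then show ?thesis using True l by (auto simp: Let_def)
  next
    case False then show ?thesis using l by (auto simp: Let_def)
  qed
qed auto

lemma sum_gaps_to_incs: "length gs = length U \<Longrightarrow> sum_list (gaps_to_incs U gs) = sum_list gs"
proof (induction U gs rule: gaps_to_incs.induct)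
  case (1 x U g gs)
  have IH: "sum_list (gaps_to_incs U gs) = sum_list gs" using 1 by auto
  have l: "length (gaps_to_incs U gs) = length U" using 1 by (simp add: length_gaps_to_incs)
  show ?case
  proof (cases "\<not> above_head x U \<and> g \<noteq> 0 \<and> gaps_to_incs U gs \<noteq> []")
    case True
    then obtain a t where "gaps_to_incs U gs = a # t" by (cases "gaps_to_incs U gs") auto
    then show ?thesis using True IH by (auto simp: Let_def)
  next
    case False then show ?thesis using IH by (auto simp: Let_def)
  qed
qed auto

lemma incs_to_gaps_gaps_to_incs: "length gs = length U \<Longrightarrow> incs_to_gaps U (gaps_to_incs U gs) = gs"
proof (induction U gs rule: gaps_to_incs.induct)
  case (1 x U g gs)
  have IH: "incs_to_gaps U (gaps_to_incs U gs) = gs" using 1 by auto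
  have l: "length (gaps_to_incs U gs) = length U" using 1 by (simp add: length_gaps_to_incs)
  show ?case
  proof (cases "\<not> above_head x U \<and> g \<noteq> 0 \<and> gaps_to_incs U gs \<noteq> []")
    case True
    then obtain a t where at: "gaps_to_incs U gs = a # t" by (cases "gaps_to_incs U gs") auto
    have "U \<noteq> []" using l at by auto
    then show ?thesis using True IH at by (auto simp: Let_def)
  next
    case False
    then show ?thesis using IH l by (auto simp: Let_def)
  qed
qed auto

lemma gaps_to_incs_incs_to_gaps: "length p = length U \<Longrightarrow> gaps_to_incs U (incs_to_gaps U p) = p"
proof (induction U arbitrary: p)
  case Nil then show ?case by simp
next
  case (Cons x U)
  then obtain a t where p: "p = a # t" by (cases p) auto
  show ?case
  proof (cases "above_head x U")
    case True
    have lb: "length (butlast p) = length U" using Cons by simp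
    have "gaps_to_incs (x # U) (incs_to_gaps (x # U) p) = gaps_to_incs U (incs_to_gaps U (butlast p)) @ [last p]"
      using True by (simp add: Let_def)
    also have "\<dots> = p" using Cons.IH[OF lb] p by simp
    finally show ?thesis .
  next
    case False
    show ?thesis
    proof (cases "a = 0")
      case True
      then show ?thesis using False Cons p by (simp add: Let_def)
    next
      case a: False
      show ?thesis
      proof (cases "U = []")
        case True
        then show ?thesis using False a Cons p by (simp add: Let_def)
      next
        case U: False
        then obtain b s where ts: "t = b # s" using Cons p by (cases t) auto
        define q where "q = (a - 1) # butlast t"
        have lt: "length t = length U" using Cons.prems p by simp
        have lq: "length q = length U" using lt ts unfolding q_def by (cases s) auto
        have ps: "incs_to_gaps (x # U) p = (last t + 1) # incs_to_gaps U q"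
          using False a U p ts unfolding q_def by simp
        have "gaps_to_incs U (incs_to_gaps U q) = q" using Cons.IH[OF lq] .
        then have "gaps_to_incs (x # U) (incs_to_gaps (x # U) p) = a # butlast t @ [last t]"
          using ps False a unfolding q_def by (simp add: Let_def)
        also have "\<dots> = p" using p ts by simp
        finally show ?thesis .
      qed
    qed
  qed
qed

fun insert_zeros :: "nat list \<Rightarrow> nat list \<Rightarrow> nat list" where
  "insert_zeros (x # U) (g # gs) = x # (replicate g 0 @ insert_zeros U gs)"
| "insert_zeros _ _ = []"

lemma length_insert_zeros: "length gs = length U \<Longrightarrow> length (insert_zeros U gs) = length U + sum_list gs"
  by (induction U gs rule: insert_zeros.induct) auto

lemma descent_weight_replicate_0: "descent_weight (replicate z 0 @ w) = descent_weight w"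
  by (induction z) auto

lemma above_head_replicate_0: "0 < x \<Longrightarrow> above_head x (replicate g 0 @ w) = (if g > 0 then True else above_head x w)"
  by (cases g) auto

lemma above_head_insert_zeros: "length gs = length U \<Longrightarrow> above_head x (insert_zeros U gs) = above_head x U"
  by (cases "(U,gs)" rule: insert_zeros.cases) auto

lemma position_weight_snoc: "position_weight (p @ [g]) = position_weight p + sum_list p + g"
  by (induction p) auto

lemma descent_weight_insert_zeros: "set U \<subseteq> {1,2} \<Longrightarrow> length gs = length U \<Longrightarrow>
    descent_weight (insert_zeros U gs) = descent_weight U + position_weight (gaps_to_incs U gs)"
proof (induction U gs rule: gaps_to_incs.induct)
  case (1 x U g gs)
  have IH: "descent_weight (insert_zeros U gs) = descent_weight U + position_weight (gaps_to_incs U gs)" using 1 by auto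
  have l: "length (gaps_to_incs U gs) = length U" using 1 by (simp add: length_gaps_to_incs)
  have s: "sum_list (gaps_to_incs U gs) = sum_list gs" using 1 by (simp add: sum_gaps_to_incs)
  have lb: "length (insert_zeros U gs) = length U + sum_list gs" using 1 by (simp add: length_insert_zeros)
  have x0: "0 < x" using 1 by auto
  have weight_Cons: "descent_weight (insert_zeros (x # U) (g # gs)) =
     (if g > 0 \<or> above_head x U then g + length U + sum_list gs else 0) + descent_weight (insert_zeros U gs)"
    using x0 lb above_head_insert_zeros[of gs U x] 1(3) by (simp add: above_head_replicate_0 descent_weight_replicate_0)
  show ?case
  proof (cases "above_head x U")
    case True
    then show ?thesis using weight_Cons IH l s by (simp add: Let_def position_weight_snoc)
  next
    case no_descent: False
    show ?thesis
    proof (cases "g = 0")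
      case True
      then show ?thesis using no_descent weight_Cons IH by (simp add: Let_def)
    next
      case g: False
      show ?thesis
      proof (cases "gaps_to_incs U gs = []")
        case True
        then have "U = []" using l by simp
        then show ?thesis using no_descent g weight_Cons True 1 by (cases gs) (auto simp: Let_def)
      next
        case False
        then obtain a t where at: "gaps_to_incs U gs = a # t" by (cases "gaps_to_incs U gs") auto
        have "position_weight (gaps_to_incs (x # U) (g # gs)) = (a+1) * Suc (Suc (length t)) + position_weight t + sum_list t + (g - 1)"
          using no_descent g at by (simp add: Let_def position_weight_snoc)
        moreover have "position_weight (gaps_to_incs U gs) = a * Suc (length t) + position_weight t" using at by simp
        moreover have "sum_list gs = a + sum_list t" using s at by simp
        moreover have "length U = Suc (length t)" using l at by simp
        ultimately show ?thesis using no_descent g weight_Cons IH by (simp add: algebra_simps)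
      qed
    qed
  qed
qed auto

function split_zeros :: "nat list \<Rightarrow> nat list \<times> nat list" where
  "split_zeros [] = ([], [])"
| "split_zeros (x # w) = (let r = split_zeros (dropWhile (\<lambda>y. y = 0) w) in
     (x # fst r, length (takeWhile (\<lambda>y. y = 0) w) # snd r))"
  by pat_completeness auto
termination by (relation "measure length") (auto simp: le_imp_less_Suc length_dropWhile_le)

lemma dropWhile_zeros: "w = [] \<or> hd w \<noteq> 0 \<Longrightarrow> dropWhile (\<lambda>y. y = 0) (replicate g 0 @ w) = w"
  by (induction g) (cases w; auto)+

lemma takeWhile_zeros: "w = [] \<or> hd w \<noteq> 0 \<Longrightarrow> takeWhile (\<lambda>y. y = 0) (replicate g 0 @ w) = replicate g 0"
  by (induction g) (cases w; auto)+

lemma hd_insert_zeros: "set U \<subseteq> {1,2} \<Longrightarrow> length gs = length U \<Longrightarrow> insert_zeros U gs = [] \<or> hd (insert_zeros U gs) \<noteq> 0"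
  by (cases "(U,gs)" rule: insert_zeros.cases) auto

lemma split_zeros_insert_zeros: "set U \<subseteq> {1,2} \<Longrightarrow> length gs = length U \<Longrightarrow> split_zeros (insert_zeros U gs) = (U, gs)"
proof (induction U gs rule: insert_zeros.induct)
  case (1 x U g gs)
  have h: "insert_zeros U gs = [] \<or> hd (insert_zeros U gs) \<noteq> 0" using 1 hd_insert_zeros by auto
  show ?case using 1 h by (simp add: Let_def dropWhile_zeros takeWhile_zeros)
qed auto

lemma takeWhile_zero_replicate: "takeWhile (\<lambda>y. y = 0) w = replicate (length (takeWhile (\<lambda>y. y = 0) w)) (0::nat)"
  by (induction w) auto

lemma insert_zeros_split_zeros: "set w \<subseteq> {0,1,2} \<Longrightarrow> (w = [] \<or> hd w \<noteq> 0) \<Longrightarrow> split_zeros w = (U, gs) \<Longrightarrow>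
   insert_zeros U gs = w \<and> length gs = length U \<and> set U \<subseteq> {1,2}"
proof (induction w arbitrary: U gs rule: split_zeros.induct)
  case 1 then show ?case by auto
next
  case (2 x w)
  define w' where "w' = dropWhile (\<lambda>y. y = 0) w"
  obtain U' gs' where r: "split_zeros w' = (U', gs')" by (cases "split_zeros w'")
  have h: "w' = [] \<or> hd w' \<noteq> 0"
  proof (cases "w' = []")
    case False then show ?thesis using hd_dropWhile[of "\<lambda>y. y = 0" w] unfolding w'_def by simp
  qed simp
  have sw: "set w' \<subseteq> {0,1,2}" using 2(2) unfolding w'_def by (auto dest: set_dropWhileD)
  have IH: "insert_zeros U' gs' = w' \<and> length gs' = length U' \<and> set U' \<subseteq> {1,2}"
    using 2(1)[folded w'_def] sw h r by auto
  have e: "U = x # U'" "gs = length (takeWhile (\<lambda>y. y = 0) w) # gs'"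
    using 2(4) r unfolding w'_def by (auto simp: Let_def)
  have ww: "w = replicate (length (takeWhile (\<lambda>y. y = 0) w)) 0 @ w'"
    unfolding w'_def by (metis takeWhile_dropWhile_id takeWhile_zero_replicate)
  have x: "x \<in> {1,2}" using 2(2,3) by auto
  show ?case using IH e ww x by (metis insert_zeros.simps(1) insert_subset length_Cons list.simps(15))
qed

text \<open>\<open>ascent_lift r\<close> is the list \<open>\<kappa>\<close> above, and \<open>word_to_parts r\<close> the partition \<open>\<pi>\<close>.\<close>

fun ascents :: "nat list \<Rightarrow> nat" where
  "ascents (x # y # r) = (if x < y then 1 else 0) + ascents (y # r)"
| "ascents _ = 0"

fun ascent_lift :: "nat list \<Rightarrow> nat list" where
  "ascent_lift [] = []"
| "ascent_lift (x # r) = (x + 3 * ascents (x # r)) # ascent_lift r"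

lemma length_ascent_lift[simp]: "length (ascent_lift r) = length r"
  by (induction r) auto

lemma ascents_snoc: "ys \<noteq> [] \<Longrightarrow> ascents (ys @ [x]) = ascents ys + (if last ys < x then 1 else 0)"
proof (induction ys rule: ascents.induct)
  case (1 a b r) then show ?case by auto
next
  case ("2_2" v) then show ?case by auto
qed auto

lemma ascent_lift_snoc: "ys \<noteq> [] \<Longrightarrow>
   ascent_lift (ys @ [x]) = map (\<lambda>v. v + 3*(if last ys < x then 1 else 0)) (ascent_lift ys) @ [x]"
proof (induction ys)
  case (Cons y ys)
  show ?case
  proof (cases "ys = []")
    case True then show ?thesis by simp
  next
    case False
    have "ascents ((y # ys) @ [x]) = ascents (y # ys) + (if last (y # ys) < x then 1 else 0)"
      by (rule ascents_snoc) simp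
    then show ?thesis using Cons False by simp
  qed
qed simp

lemma sum_ascent_lift_rev: "sum_list (ascent_lift (rev w)) = sum_list w + 3 * descent_weight w"
proof (induction w)
  case (Cons x w)
  show ?case
  proof (cases "w = []")
    case True then show ?thesis by simp
  next
    case False
    have l: "last (rev w) = hd w" using False by (simp add: last_rev)
    have "ascent_lift (rev (x # w)) = map (\<lambda>v. v + 3*(if hd w < x then 1 else 0)) (ascent_lift (rev w)) @ [x]"
      using ascent_lift_snoc[of "rev w" x] False l by simp
    then have "sum_list (ascent_lift (rev (x # w))) = sum_list (ascent_lift (rev w)) + length w * (3*(if hd w < x then 1 else 0)) + x"
      by (simp add: sum_list_map_add_const)
    moreover have "above_head x w = (hd w < x)" using False by (cases w) auto
    ultimately show ?thesis using Cons by (cases "hd w < x") (auto simp: algebra_simps)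
  qed
qed simp

lemma sum_list_le_position_weight: "sum_list p \<le> position_weight p"
  by (induction p) auto

definition word_to_parts :: "nat list \<Rightarrow> nat list" where
  "word_to_parts r = (let pr = split_zeros (dropWhile (\<lambda>y. y = 0) (rev r))
     in assemble (fst pr) (gaps_to_incs (fst pr) (snd pr)))"

definition parts_to_word :: "nat \<Rightarrow> nat list \<Rightarrow> nat list" where
  "parts_to_word L vs = (let q = disassemble vs; w = insert_zeros (fst q) (incs_to_gaps (fst q) (snd q))
     in rev w @ replicate (L - length w) 0)"

lemma word_decomposition:
  assumes "set r \<subseteq> {0,1,2}"
  obtains U gs z where "set U \<subseteq> {1,2}" "length gs = length U"
    "r = rev (insert_zeros U gs) @ replicate z 0"
proof -
  define w where "w = dropWhile (\<lambda>y. y = 0) (rev r)"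
  obtain U gs where split: "split_zeros w = (U, gs)" by (cases "split_zeros w")
  have "set w \<subseteq> set r" unfolding w_def by (auto dest: set_dropWhileD)
  with assms have "set w \<subseteq> {0,1,2}" by blast
  moreover have "w = [] \<or> hd w \<noteq> 0"
    using hd_dropWhile[of "\<lambda>y. y = 0" "rev r"] unfolding w_def by blast
  ultimately have U: "insert_zeros U gs = w" "length gs = length U" "set U \<subseteq> {1,2}"
    using insert_zeros_split_zeros[OF _ _ split] by blast+
  define z where "z = length (takeWhile (\<lambda>y. y = 0) (rev r))"
  have "rev r = takeWhile (\<lambda>y. y = 0) (rev r) @ w" by (simp add: w_def)
  also have "takeWhile (\<lambda>y. y = 0) (rev r) = replicate z 0" unfolding z_def by (rule takeWhile_zero_replicate)
  finally have "r = rev (replicate z 0 @ w)" by (metis rev_rev_ident)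
  then show thesis using that U by simp
qed

lemma word_to_parts_insert_zeros:
  "set U \<subseteq> {1,2} \<Longrightarrow> length gs = length U \<Longrightarrow>
    word_to_parts (rev (insert_zeros U gs) @ replicate z 0) = assemble U (gaps_to_incs U gs)"
  using hd_insert_zeros[of U gs]
  by (simp add: word_to_parts_def dropWhile_zeros split_zeros_insert_zeros)

lemma filter_positive_insert_zeros:
  "set U \<subseteq> {1,2} \<Longrightarrow> length gs = length U \<Longrightarrow> filter (\<lambda>v. 0 < v) (insert_zeros U gs) = U"
  by (induction U gs rule: insert_zeros.induct) auto

lemma sum_list_insert_zeros: "length gs = length U \<Longrightarrow> sum_list (insert_zeros U gs) = sum_list U"
  by (induction U gs rule: insert_zeros.induct) auto

lemma sorted_word_to_parts: "set r \<subseteq> {0,1,2} \<Longrightarrow> sorted (word_to_parts r)"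
  by (elim word_decomposition)
    (simp add: word_to_parts_insert_zeros sorted_assemble length_gaps_to_incs)

lemma residues_word_to_parts:
  "set r \<subseteq> {0,1,2} \<Longrightarrow> map (\<lambda>v. v mod 3) (word_to_parts r) = filter (\<lambda>v. 0 < v) (rev r)"
  by (elim word_decomposition)
    (auto simp: word_to_parts_insert_zeros residues_assemble length_gaps_to_incs
      filter_positive_insert_zeros)

lemma word_to_parts_not_dvd:
  assumes "set r \<subseteq> {0,1,2}" "v \<in> set (word_to_parts r)"
  shows "v mod 3 \<noteq> 0"
proof -
  have "v mod 3 \<in> set (map (\<lambda>v. v mod 3) (word_to_parts r))" using assms(2) by simp
  then show ?thesis using residues_word_to_parts[OF assms(1)] by simp
qed

lemma filter_eq_filter_positive: "0 < (c::nat) \<Longrightarrow> filter (\<lambda>v. v = c) (filter (\<lambda>v. 0 < v) xs) = filter (\<lambda>v. v = c) xs"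
  by (induction xs) auto

lemma count_word_to_parts:
  assumes "set r \<subseteq> {0,1,2}" "c \<noteq> 0"
  shows "length (filter (\<lambda>v. v mod 3 = c) (word_to_parts r)) = length (filter (\<lambda>v. v = c) r)"
proof -
  have "length (filter (\<lambda>v. v mod 3 = c) (word_to_parts r))
      = length (filter (\<lambda>v. v = c) (map (\<lambda>v. v mod 3) (word_to_parts r)))"
    by (simp add: filter_map comp_def)
  also have "\<dots> = length (filter (\<lambda>v. v = c) (filter (\<lambda>v. 0 < v) (rev r)))"
    using assms(1) by (simp only: residues_word_to_parts)
  also have "\<dots> = length (filter (\<lambda>v. v = c) (rev r))"
    using assms(2) by (simp only: filter_eq_filter_positive)
  finally show ?thesis by (simp flip: rev_filter)
qed

lemma sum_word_to_parts: "set r \<subseteq> {0,1,2} \<Longrightarrow> sum_list (word_to_parts r) = sum_list (ascent_lift r)"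
proof (elim word_decomposition)
  fix U gs z
  assume U: "set U \<subseteq> {1,2}" "length gs = length U" and r: "r = rev (insert_zeros U gs) @ replicate z 0"
  have "descent_weight (rev r) = descent_weight U + position_weight (gaps_to_incs U gs)"
    using U r by (simp add: descent_weight_replicate_0 descent_weight_insert_zeros)
  moreover have "sum_list (rev r) = sum_list U" using U r by (simp add: sum_list_insert_zeros)
  ultimately show ?thesis
    using U r sum_ascent_lift_rev[of "rev r"]
    by (simp add: word_to_parts_insert_zeros sum_assemble length_gaps_to_incs)
qed

lemma parts_to_word_word_to_parts:
  "set r \<subseteq> {0,1,2} \<Longrightarrow> parts_to_word (length r) (word_to_parts r) = r"
  by (elim word_decomposition)
    (simp add: word_to_parts_insert_zeros disassemble_assemble length_gaps_to_incs
      incs_to_gaps_gaps_to_incs parts_to_word_def Let_def)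

lemma length_incs_to_gaps: "length p = length U \<Longrightarrow> length (incs_to_gaps U p) = length U"
proof (induction U arbitrary: p)
  case (Cons x U)
  then obtain a t where p: "p = a # t" by (cases p) auto
  show ?case
  proof (cases "above_head x U")
    case True then show ?thesis using Cons.IH[of "butlast p"] Cons.prems by simp
  next
    case False
    show ?thesis
    proof (cases "a = 0")
      case True then show ?thesis using False Cons p by simp
    next
      case a: False
      show ?thesis
      proof (cases "U = []")
        case True then show ?thesis using False a p by simp
      next
        case U: False
        then obtain b s where ts: "t = b # s" using Cons p by (cases t) auto
        have lt: "length t = length U" using Cons.prems p by simp
        have "length ((a - 1) # butlast t) = length U" using lt ts by (cases s) auto
        then show ?thesis using Cons.IH False a U p by simp
      qed
    qed
  qed
qed simp

lemma set_insert_zeros: "set (insert_zeros U gs) \<subseteq> insert 0 (set U)"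
  by (induction U gs rule: insert_zeros.induct) auto

lemma parts_decomposition:
  assumes "sorted vs" "\<forall>v\<in>set vs. v mod 3 \<noteq> 0"
  obtains U gs where "set U \<subseteq> {1,2}" "length gs = length U"
    "vs = assemble U (gaps_to_incs U gs)"
    "parts_to_word L vs = rev (insert_zeros U gs) @ replicate (L - length (insert_zeros U gs)) 0"
proof -
  obtain U p where dis: "disassemble vs = (U, p)" by (cases "disassemble vs")
  then have U: "assemble U p = vs" "set U \<subseteq> {1,2}" "length p = length U"
    using assemble_disassemble assms by blast+
  define gs where "gs = incs_to_gaps U p"
  have "length gs = length U" "gaps_to_incs U gs = p"
    using U by (simp_all add: gs_def length_incs_to_gaps gaps_to_incs_incs_to_gaps)
  then show thesis using that U dis by (simp add: parts_to_word_def gs_def Let_def)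
qed

lemma length_insert_zeros_le:
  assumes "set U \<subseteq> {1,2}" "length gs = length U"
  defines "vs \<equiv> assemble U (gaps_to_incs U gs)"
  shows "length (insert_zeros U gs) \<le> sum_list vs + length vs"
proof -
  let ?p = "gaps_to_incs U gs"
  have p: "length ?p = length U" using assms length_gaps_to_incs by simp
  have "sum_list gs = sum_list ?p" using sum_gaps_to_incs assms by simp
  also have "\<dots> \<le> position_weight ?p" by (rule sum_list_le_position_weight)
  also have "\<dots> \<le> sum_list vs" using p by (simp add: vs_def sum_assemble)
  finally show ?thesis
    using assms p by (simp add: length_insert_zeros length_assemble)
qed

lemma parts_to_word:
  assumes "sorted vs" "\<forall>v\<in>set vs. v mod 3 \<noteq> 0" "sum_list vs + length vs \<le> L"
  shows "length (parts_to_word L vs) = L" "set (parts_to_word L vs) \<subseteq> {0,1,2}"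
    "word_to_parts (parts_to_word L vs) = vs"
proof -
  obtain U gs where U: "set U \<subseteq> {1,2}" "length gs = length U"
    and vs: "vs = assemble U (gaps_to_incs U gs)"
    and word: "parts_to_word L vs = rev (insert_zeros U gs) @ replicate (L - length (insert_zeros U gs)) 0"
    using parts_decomposition assms(1,2) by blast
  have "length (insert_zeros U gs) \<le> L" using length_insert_zeros_le[OF U] vs assms(3) by simp
  then show "length (parts_to_word L vs) = L" using word by simp
  show "set (parts_to_word L vs) \<subseteq> {0,1,2}" using word U set_insert_zeros[of U gs] by auto
  show "word_to_parts (parts_to_word L vs) = vs" using word U vs by (simp add: word_to_parts_insert_zeros)
qed

section \<open>Sparse lists\<close>

text \<open>Padded with zeros, the sparse lists are the partitions in \<open>\<Lambda>\<close>.\<close>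

fun sparse :: "nat list \<Rightarrow> bool" where
  "sparse [] = True"
| "sparse [x] = (x \<noteq> 1)"
| "sparse (x # y # r) = (y \<le> x \<and> x - y \<noteq> 1 \<and> sparse (y # r))"

definition combine :: "nat list \<Rightarrow> nat list \<Rightarrow> nat list" where
  "combine r s = map2 (\<lambda>k t. 2*k + 3*t) (ascent_lift r) s"

lemma combine_Nil[simp]: "combine [] s = []" "combine r [] = []"
  unfolding combine_def by (cases r; simp)+

lemma combine_Cons[simp]: "combine (x # r) (t # s) = (2*(x + 3*ascents (x # r)) + 3*t) # combine r s"
  unfolding combine_def by simp

lemma length_combine: "length s = length r \<Longrightarrow> length (combine r s) = length r"
  unfolding combine_def by simp

lemma double_combine_entry_mod3: "(x::nat) \<le> 2 \<Longrightarrow> (2*(2*(x + 3*N) + 3*t)) mod 3 = x"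
proof -
  assume "x \<le> 2"
  have "2*(2*(x + 3*N) + 3*t) = x + 3*(x + 4*N + 2*t)" by simp
  then show ?thesis using \<open>x \<le> 2\<close> by (simp only: mod_mult_self2) simp
qed

lemma word_of_combine:
  "set r \<subseteq> {0,1,2} \<Longrightarrow> length s = length r \<Longrightarrow> map (\<lambda>z. (2*z) mod 3) (combine r s) = r"
proof (induction r s rule: list_induct2')
  case (4 x r t s)
  then show ?case using double_combine_entry_mod3[of x "ascents (x # r)" t] by auto
qed auto

lemma combine_inj: "set r \<subseteq> {0,1,2} \<Longrightarrow> set r' \<subseteq> {0,1,2} \<Longrightarrow> length s = length r \<Longrightarrow>
    length s' = length r' \<Longrightarrow> combine r s = combine r' s' \<Longrightarrow> r = r' \<and> s = s'"
proof -
  assume a: "set r \<subseteq> {0,1,2}" "set r' \<subseteq> {0,1,2}" "length s = length r" "length s' = length r'"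
    "combine r s = combine r' s'"
  have rr: "r = r'" using word_of_combine[of r s] word_of_combine[of r' s'] a by metis
  have "length s = length s'" using a rr by simp
  then have "s = s'" using a(5) a(3) unfolding rr
  proof (induction s s' arbitrary: r' rule: list_induct2)
    case (Cons t s t' s')
    then obtain x r where "r' = x # r" by (cases r') auto
    then show ?case using Cons by auto
  qed simp
  then show ?thesis using rr by simp
qed

lemma sparse_combine_step: "(x::nat) \<le> 2 \<Longrightarrow> y \<le> 2 \<Longrightarrow> t' \<le> t \<Longrightarrow>
   2*(y + 3*N) + 3*t' \<le> 2*(x + 3*((if x < y then 1 else 0) + N)) + 3*t \<and>
   2*(x + 3*((if x < y then 1 else 0) + N)) + 3*t - (2*(y + 3*N) + 3*t') \<noteq> 1"
proof -
  assume a: "x \<le> 2" "y \<le> 2" "t' \<le> t"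
  then obtain m where m: "t = t' + m" using le_Suc_ex by blast
  have "x = 0 \<or> x = 1 \<or> x = 2" "y = 0 \<or> y = 1 \<or> y = 2" using a by auto
  then show ?thesis using m by (elim disjE) (simp_all add: algebra_simps)
qed

lemma sparse_combine: "set r \<subseteq> {0,1,2} \<Longrightarrow> length s = length r \<Longrightarrow> sorted_wrt (\<ge>) s \<Longrightarrow> sparse (combine r s)"
proof (induction r s rule: list_induct2')
  case (4 x r t s)
  show ?case
  proof (cases r)
    case Nil
    then have "s = []" using 4 by simp
    then show ?thesis using Nil by (cases t; cases x) auto
  next
    case (Cons y r')
    then obtain t' s' where s: "s = t' # s'" using 4 by (cases s) auto
    have tt: "t' \<le> t" using 4(4) s by simp
    have xy: "x \<le> 2" "y \<le> 2" using 4(2) Cons by auto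
    have IH: "sparse (combine r s)" using 4 by auto
    have n: "ascents (x # r) = (if x < y then 1 else 0) + ascents (y # r')" using Cons by simp
    show ?thesis using IH sparse_combine_step[OF xy tt, of "ascents (y # r')"] Cons s n by simp
  qed
qed auto

lemma double_plus_triple_if_neq_1: "(x::nat) \<noteq> 1 \<Longrightarrow> \<exists>rx t. rx \<le> 2 \<and> x = 2*rx + 3*t"
  by presburger

lemma gap_residue: "(ry::nat) \<le> 2 \<Longrightarrow> d \<noteq> 1 \<Longrightarrow>
    \<exists>rx k. rx \<le> 2 \<and> d + 2*ry = 2*rx + 6*(if rx < ry then 1 else 0) + 3*k"
  by presburger

lemma combine_extend:
  assumes "(ry::nat) \<le> 2" "y \<le> x" "x - y \<noteq> 1" "y = 2*(ry + 3*N) + 3*t2"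
  shows "\<exists>rx t. rx \<le> 2 \<and> t2 \<le> t \<and> x = 2*(rx + 3*((if rx < ry then 1 else 0) + N)) + 3*t"
proof -
  obtain rx k where rx: "rx \<le> 2" and k: "x - y + 2*ry = 2*rx + 6*(if rx < ry then 1 else 0) + 3*k"
    using gap_residue assms(1,3) by blast
  have "x = 2*(rx + 3*((if rx < ry then 1 else 0) + N)) + 3*(t2 + k)"
    using k assms(2,4) by (cases "rx < ry") simp_all
  with rx show ?thesis by (intro exI[of _ rx] exI[of _ "t2 + k"]) simp
qed

lemma sparse_combine_surj: "sparse l \<Longrightarrow> \<exists>r s. set r \<subseteq> {0,1,2} \<and> length r = length l \<and> length s = length l \<and>
    sorted_wrt (\<ge>) s \<and> combine r s = l"
proof (induction l rule: sparse.induct)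
  case 1 then show ?case by (intro exI[of _ "[]"]) simp
next
  case (2 x)
  then obtain rx t where "rx \<le> 2" "x = 2*rx + 3*t" using double_plus_triple_if_neq_1[of x] by auto
  then show ?case by (intro exI[of _ "[rx]"] exI[of _ "[t]"]) auto
next
  case (3 x y l)
  then obtain r s where rs: "set r \<subseteq> {0,1,2}" "length r = length (y # l)" "length s = length (y # l)"
    "sorted_wrt (\<ge>) s" "combine r s = y # l" by auto
  then obtain ry r' t2 s' where e: "r = ry # r'" "s = t2 # s'" by (cases r; cases s) auto
  have ry: "ry \<le> 2" using rs e by auto
  have yy: "y = 2*(ry + 3*ascents (ry # r')) + 3*t2" using rs(5) e by simp
  have xy: "y \<le> x" "x - y \<noteq> 1" using 3(2) by auto
  obtain rx t where h: "rx \<le> 2" "t2 \<le> t" "x = 2*(rx + 3*((if rx < ry then 1 else 0) + ascents (ry # r'))) + 3*t"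
    using combine_extend[OF ry xy yy] by blast
  have s2: "sorted_wrt (\<ge>) (t # s)" using rs(4) e h(2) by auto
  have c: "combine (rx # r) (t # s) = x # y # l" using rs(5) e h(3) by simp
  show ?case using rs s2 c h(1) by (intro exI[of _ "rx # r"] exI[of _ "t # s"]) auto
qed

lemma sum_combine: "length s = length r \<Longrightarrow> sum_list (combine r s) = 2 * sum_list (ascent_lift r) + 3 * sum_list s"
proof (induction r s rule: list_induct2')
  case (4 x r t s) then show ?case by simp
qed auto

lemma count_combine: "set r \<subseteq> {0,1,2} \<Longrightarrow> length s = length r \<Longrightarrow>
   length (filter (\<lambda>v. v mod 3 = 2) (combine r s)) = length (filter (\<lambda>v. v = 1) r) \<and>
   length (filter (\<lambda>v. v mod 3 = 1) (combine r s)) = length (filter (\<lambda>v. v = 2) r)"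
proof (induction r s rule: list_induct2')
  case (4 x r t s)
  have x: "x = 0 \<or> x = 1 \<or> x = 2" using 4 by auto
  have e: "2*(x + 3*ascents (x # r)) + 3*t = 2*x + 3*(2*ascents (x # r) + t)" by simp
  have m: "(2*(x + 3*ascents (x # r)) + 3*t) mod 3 = (2*x) mod 3" by (subst e, rule mod_mult_self2)
  show ?case using 4 x m by auto
qed auto

lemma sparse_sorted: "sparse l \<Longrightarrow> sorted_wrt (\<ge>) l"
  by (induction l rule: sparse.induct) auto

section \<open>Partitions as padded lists\<close>

definition padded :: "nat \<Rightarrow> nat multiset \<Rightarrow> nat list" where
  "padded L p = rev (sorted_list_of_multiset p) @ replicate (L - size p) 0"

lemma length_sorted_list_of_multiset: "length (sorted_list_of_multiset p) = size p"
  by (metis mset_sorted_list_of_multiset size_mset)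

lemma length_padded: "size p \<le> L \<Longrightarrow> length (padded L p) = L"
  unfolding padded_def by (simp add: length_sorted_list_of_multiset)

lemma sorted_rep0: "sorted_wrt (\<ge>) (replicate k (0::nat))"
  by (induction k) auto

lemma sorted_padded: "sorted_wrt (\<ge>) (padded L p)"
proof -
  have "sorted_wrt (\<ge>) (rev (sorted_list_of_multiset p))"
    using sorted_sorted_list_of_multiset[of p] by (simp add: sorted_wrt_rev)
  then show ?thesis unfolding padded_def using sorted_rep0 by (simp add: sorted_wrt_append)
qed

lemma mset_padded: "(\<forall>x\<in>#p. 0 < x) \<Longrightarrow> mset (filter (\<lambda>x. x \<noteq> 0) (padded L p)) = p"
proof -
  assume a: "\<forall>x\<in>#p. 0 < x"
  have "filter (\<lambda>x. x \<noteq> 0) (rev (sorted_list_of_multiset p)) = rev (sorted_list_of_multiset p)"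
    using a by (auto simp: filter_id_conv)
  then show ?thesis unfolding padded_def by simp
qed

lemma sum_padded: "sum_list (padded L p) = sum_mset p"
  unfolding padded_def by (simp add: sum_mset_sum_list[symmetric])

lemma set_padded: "set (padded L p) \<subseteq> insert 0 (set_mset p)"
  unfolding padded_def by auto

lemma desc_split: "sorted_wrt (\<ge>) (l::nat list) \<Longrightarrow> l = filter (\<lambda>x. x \<noteq> 0) l @ replicate (length l - length (filter (\<lambda>x. x \<noteq> 0) l)) 0"
proof (induction l)
  case (Cons a l)
  show ?case
  proof (cases "a = 0")
    case True
    then have "\<forall>x\<in>set l. x = 0" using Cons.prems by auto
    then have "filter (\<lambda>x. x \<noteq> 0) l = []" by (simp add: filter_empty_conv)
    moreover have "l = replicate (length l) 0" using \<open>\<forall>x\<in>set l. x = 0\<close> by (simp add: replicate_length_same)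
    ultimately show ?thesis using True by simp
  next
    case False
    define F where "F = filter (\<lambda>x. x \<noteq> 0) l"
    define R where "R = replicate (length l - length F) (0::nat)"
    have e: "l = F @ R" using Cons unfolding F_def R_def by simp
    have "filter (\<lambda>x. x \<noteq> 0) (a # l) @ replicate (length (a # l) - length (filter (\<lambda>x. x \<noteq> 0) (a # l))) 0
          = a # (F @ R)" using False unfolding F_def R_def by simp
    then show ?thesis using e by simp
  qed
qed simp

lemma padded_mset: "sorted_wrt (\<ge>) l \<Longrightarrow> length l = L \<Longrightarrow> padded L (mset (filter (\<lambda>x. x \<noteq> 0) l)) = l"
proof -
  assume s: "sorted_wrt (\<ge>) l" and L: "length l = L"
  define f where "f = filter (\<lambda>x. x \<noteq> 0) l"
  have sf: "sorted_wrt (\<ge>) f" unfolding f_def using s by (simp add: sorted_wrt_filter)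
  have "sorted (rev f)" using sf by (simp add: sorted_wrt_rev)
  then have "sort f = rev f"
    by (metis mset_rev properties_for_sort)
  then have r: "rev (sorted_list_of_multiset (mset f)) = f" by (simp add: sorted_list_of_multiset_mset)
  have sz: "size (mset f) = length f" by simp
  have "padded L (mset f) = f @ replicate (L - length f) 0" unfolding padded_def using r sz by simp
  also have "\<dots> = l" using desc_split[OF s] L unfolding f_def by simp
  finally show ?thesis unfolding f_def .
qed

lemma count_padded: "c \<noteq> 0 \<Longrightarrow> length (filter (\<lambda>v. v mod 3 = c) (padded L p)) = size (filter_mset (\<lambda>v. v mod 3 = c) p)"
proof -
  assume c: "c \<noteq> 0"
  have "length (filter (\<lambda>v. v mod 3 = c) (rev (sorted_list_of_multiset p))) = size (filter_mset (\<lambda>v. v mod 3 = c) p)"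
    by (metis length_rev mset_filter mset_rev mset_sorted_list_of_multiset rev_filter size_mset)
  moreover have "filter (\<lambda>v. v mod 3 = c) (replicate k (0::nat)) = []" for k using c by (induction k) auto
  ultimately show ?thesis unfolding padded_def by simp
qed

definition neighbour_free :: "nat list \<Rightarrow> bool" where
  "neighbour_free l \<longleftrightarrow> 1 \<notin> set l \<and> (\<forall>a\<in>set l. a \<noteq> 0 \<longrightarrow> a + 1 \<notin> set l)"

lemma neighbour_free_Cons_Cons:
  assumes "sorted_wrt (\<ge>) (x # y # r)"
  shows "neighbour_free (x # y # r) \<longleftrightarrow> x - y \<noteq> 1 \<and> neighbour_free (y # r)"
proof
  have le: "\<forall>a\<in>set (y # r). a \<le> y" and "y \<le> x" using assms by auto
  show "x - y \<noteq> 1 \<and> neighbour_free (y # r)" if "neighbour_free (x # y # r)"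
    using that \<open>y \<le> x\<close> unfolding neighbour_free_def by (cases "y = 0") auto
  assume right: "x - y \<noteq> 1 \<and> neighbour_free (y # r)"
  have "a + 1 \<noteq> x" if "a \<in> set (y # r)" for a
  proof
    assume x: "a + 1 = x"
    moreover have "a \<le> y" using le that by blast
    ultimately have "y = a \<or> y = a + 1" using \<open>y \<le> x\<close> by linarith
    then show False using right that x unfolding neighbour_free_def by (cases "a = 0") auto
  qed
  moreover have "x \<noteq> 1" using right \<open>y \<le> x\<close> unfolding neighbour_free_def by (cases "y = 0") auto
  ultimately show "neighbour_free (x # y # r)"
    using right le \<open>y \<le> x\<close> unfolding neighbour_free_def by fastforce
qed

lemma sparse_iff: "sorted_wrt (\<ge>) l \<Longrightarrow> sparse l \<longleftrightarrow> neighbour_free l"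
proof (induction l rule: sparse.induct)
  case (3 x y r)
  then show ?case using neighbour_free_Cons_Cons by auto
qed (auto simp: neighbour_free_def)

definition sparse_lists :: "nat \<Rightarrow> nat \<Rightarrow> nat \<Rightarrow> nat list set" where
  "sparse_lists n m1 m2 = {l. length l = n \<and> sparse l \<and> sum_list l = n \<and>
      length (filter (\<lambda>v. v mod 3 = 1) l) = m2 \<and> length (filter (\<lambda>v. v mod 3 = 2) l) = m1}"

definition B2_set :: "nat \<Rightarrow> nat \<Rightarrow> nat \<Rightarrow> nat multiset set" where
  "B2_set n m1 m2 = {p \<in> partitions n.
      (\<forall>x\<in>#p. 2 \<le> x) \<and> (\<forall>x\<in>#p. x + 1 \<notin># p) \<and>
      nparts_mod 1 3 p = m2 \<and> nparts_mod 2 3 p = m1}"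

lemma size_le_sum_mset: "(\<forall>x\<in>#p. 0 < x) \<Longrightarrow> size p \<le> sum_mset (p::nat multiset)"
proof (induction p)
  case (add x p) then show ?case by auto
qed simp

lemma count_mod3_filter_nonzero: "(c::nat) \<noteq> 0 \<Longrightarrow>
   size (filter_mset (\<lambda>v. v mod 3 = c) (mset (filter (\<lambda>x. x \<noteq> 0) (l::nat list)))) = length (filter (\<lambda>v. v mod 3 = c) l)"
proof -
  assume c: "c \<noteq> 0"
  have "filter (\<lambda>v. v mod 3 = c) (filter (\<lambda>x. x \<noteq> 0) l) = filter (\<lambda>v. v mod 3 = c) l"
    using c by (induction l) auto
  then show ?thesis by (metis mset_filter size_mset)
qed

lemma sum_list_filter_nonzero: "sum_list (filter (\<lambda>x. x \<noteq> 0) l) = sum_list (l::nat list)"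
  by (induction l) auto

lemma padded_in_sparse_lists:
  assumes "p \<in> B2_set n m1 m2"
  shows "padded n p \<in> sparse_lists n m1 m2"
proof -
  let ?l = "padded n p"
  have pos: "\<forall>x\<in>#p. 0 < x" and sum: "sum_mset p = n" and large: "\<forall>x\<in>#p. 2 \<le> x"
    and separated: "\<forall>x\<in>#p. x + 1 \<notin># p"
    using assms unfolding B2_set_def partitions_def by auto
  have "size p \<le> n" using size_le_sum_mset[OF pos] sum by simp
  have parts: "set ?l \<subseteq> insert 0 (set_mset p)" by (rule set_padded)
  have "1 \<notin> set ?l" using parts large by fastforce
  moreover have "\<forall>a\<in>set ?l. a \<noteq> 0 \<longrightarrow> a + 1 \<notin> set ?l" using parts separated by fastforce
  ultimately have "sparse ?l" using sparse_iff[of ?l] sorted_padded by (simp add: neighbour_free_def)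
  then show ?thesis
    using assms length_padded[OF \<open>size p \<le> n\<close>] sum_padded sum count_padded
    unfolding sparse_lists_def B2_set_def nparts_mod_def by auto
qed

lemma nonzeros_in_B2_set:
  assumes "l \<in> sparse_lists n m1 m2"
  shows "mset (filter (\<lambda>x. x \<noteq> 0) l) \<in> B2_set n m1 m2"
proof -
  let ?p = "mset (filter (\<lambda>x. x \<noteq> 0) l)"
  have "sparse l" using assms unfolding sparse_lists_def by simp
  then have l: "1 \<notin> set l" "\<forall>a\<in>set l. a \<noteq> 0 \<longrightarrow> a + 1 \<notin> set l"
    using sparse_iff[of l] sparse_sorted by (simp_all add: neighbour_free_def)
  have parts: "set_mset ?p = set l - {0}" by auto
  have "sum_mset ?p = n"
    using assms sum_mset_sum_list[of "filter (\<lambda>x. x \<noteq> 0) l"] sum_list_filter_nonzero[of l]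
    unfolding sparse_lists_def by simp
  moreover have "\<forall>x\<in>#?p. 2 \<le> x" using parts l by (auto simp: not_less_eq_eq le_Suc_eq)
  moreover have "\<forall>x\<in>#?p. x + 1 \<notin># ?p" using parts l by auto
  moreover have "nparts_mod 1 3 ?p = m2" "nparts_mod 2 3 ?p = m1"
    using assms count_mod3_filter_nonzero[of 1 l] count_mod3_filter_nonzero[of 2 l]
    unfolding sparse_lists_def nparts_mod_def by auto
  ultimately show ?thesis using parts unfolding B2_set_def partitions_def by auto
qed

lemma card_B2_set: "card (B2_set n m1 m2) = card (sparse_lists n m1 m2)"
proof -
  have "bij_betw (padded n) (B2_set n m1 m2) (sparse_lists n m1 m2)"
  proof (rule bij_betw_byWitness[where f' = "\<lambda>l. mset (filter (\<lambda>x. x \<noteq> 0) l)"])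
    show "\<forall>p\<in>B2_set n m1 m2. mset (filter (\<lambda>x. x \<noteq> 0) (padded n p)) = p"
      unfolding B2_set_def partitions_def using mset_padded by auto
    show "\<forall>l\<in>sparse_lists n m1 m2. padded n (mset (filter (\<lambda>x. x \<noteq> 0) l)) = l"
      unfolding sparse_lists_def using padded_mset sparse_sorted by auto
  qed (use padded_in_sparse_lists nonzeros_in_B2_set in blast)+
  then show ?thesis by (rule bij_betw_same_card)
qed

section \<open>Pairs of partitions\<close>

definition pair_parts :: "nat \<Rightarrow> nat \<Rightarrow> nat \<Rightarrow> (nat multiset \<times> nat multiset) set" where
  "pair_parts n m1 m2 = {(\<pi>, \<sigma>). (\<forall>x\<in>#\<pi>. x mod 3 \<noteq> 0) \<and> (\<forall>x\<in>#\<sigma>. 0 < x) \<and>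
      2 * sum_mset \<pi> + 3 * sum_mset \<sigma> = n \<and>
      size (filter_mset (\<lambda>x. x mod 3 = 1) \<pi>) = m1 \<and> size (filter_mset (\<lambda>x. x mod 3 = 2) \<pi>) = m2}"

definition to_sparse :: "nat \<Rightarrow> nat multiset \<times> nat multiset \<Rightarrow> nat list" where
  "to_sparse n ps = combine (parts_to_word n (sorted_list_of_multiset (fst ps))) (padded n (snd ps))"

lemma length_filter_sorted_list_of_multiset: "length (filter Pr (sorted_list_of_multiset (M::nat multiset))) = size (filter_mset Pr M)"
  by (metis mset_filter mset_sorted_list_of_multiset size_mset)

lemma pair_parts_word:
  assumes "(\<pi>, \<sigma>) \<in> pair_parts n m1 m2"
  defines "r \<equiv> parts_to_word n (sorted_list_of_multiset \<pi>)"
  shows "length r = n \<and> set r \<subseteq> {0,1,2} \<and> word_to_parts r = sorted_list_of_multiset \<pi> \<and> size \<sigma> \<le> n"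
proof -
  let ?pl = "sorted_list_of_multiset \<pi>"
  have nz: "\<forall>x\<in>#\<pi>. x mod 3 \<noteq> 0" and sgp: "\<forall>x\<in>#\<sigma>. 0 < x"
    and sm: "2 * sum_mset \<pi> + 3 * sum_mset \<sigma> = n" using assms(1) unfolding pair_parts_def by auto
  have "\<forall>x\<in>#\<pi>. 0 < x" using nz by (metis mod_0 neq0_conv)
  then have "size \<pi> \<le> sum_mset \<pi>" by (rule size_le_sum_mset)
  then have bd: "sum_list ?pl + length ?pl \<le> n" using sm
    by (simp add: length_sorted_list_of_multiset sum_mset_sum_list[symmetric])
  have s1: "sorted ?pl" by simp
  have s2: "\<forall>v\<in>set ?pl. v mod 3 \<noteq> 0" using nz by simp
  have "size \<sigma> \<le> sum_mset \<sigma>" using size_le_sum_mset[OF sgp] .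
  then have "size \<sigma> \<le> n" using sm by linarith
  then show ?thesis using parts_to_word[OF s1 s2 bd] unfolding r_def by blast
qed

lemma to_sparse_in: "ps \<in> pair_parts n m1 m2 \<Longrightarrow> to_sparse n ps \<in> sparse_lists n m1 m2"
proof -
  assume a: "ps \<in> pair_parts n m1 m2"
  obtain \<pi> \<sigma> where ps: "ps = (\<pi>, \<sigma>)" by (cases ps)
  let ?pl = "sorted_list_of_multiset \<pi>"
  define r where "r = parts_to_word n ?pl"
  define s where "s = padded n \<sigma>"
  have word: "length r = n \<and> set r \<subseteq> {0,1,2} \<and> word_to_parts r = ?pl \<and> size \<sigma> \<le> n"
    using pair_parts_word[of \<pi> \<sigma> n m1 m2] a ps unfolding r_def by simp
  have ls: "length s = n" unfolding s_def using word length_padded by simp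
  have ss: "sorted_wrt (\<ge>) s" unfolding s_def by (rule sorted_padded)
  have "set r \<subseteq> {0,1,2}" using word by blast
  then have parts: "sum_list (word_to_parts r) = sum_list (ascent_lift r)"
    "\<forall>c\<in>{1,2}. length (filter (\<lambda>v. v mod 3 = c) (word_to_parts r)) = length (filter (\<lambda>v. v = c) r)"
    by (simp_all add: sum_word_to_parts count_word_to_parts)
  have g: "to_sparse n ps = combine r s" unfolding to_sparse_def ps r_def s_def by simp
  have lr: "length s = length r" using ls word by simp
  have sm: "2 * sum_mset \<pi> + 3 * sum_mset \<sigma> = n" and c1: "size (filter_mset (\<lambda>x. x mod 3 = 1) \<pi>) = m1"
    and c2: "size (filter_mset (\<lambda>x. x mod 3 = 2) \<pi>) = m2" using a ps unfolding pair_parts_def by auto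
  have "sum_list (sorted_list_of_multiset \<pi>) = sum_mset \<pi>"
    by (metis mset_sorted_list_of_multiset sum_mset_sum_list)
  then have "sum_list (ascent_lift r) = sum_mset \<pi>" using parts word by simp
  moreover have "sum_list s = sum_mset \<sigma>" unfolding s_def by (rule sum_padded)
  ultimately have "sum_list (combine r s) = n"
    using sum_combine[OF lr] sm by simp
  moreover have "sparse (combine r s)" using sparse_combine word lr ss by simp
  moreover have "length (combine r s) = n" using length_combine lr word by simp
  moreover have "length (filter (\<lambda>v. v mod 3 = 2) (combine r s)) = m1"
    using count_combine[of r s] word lr parts c1 length_filter_sorted_list_of_multiset by auto
  moreover have "length (filter (\<lambda>v. v mod 3 = 1) (combine r s)) = m2"
    using count_combine[of r s] word lr parts c2 length_filter_sorted_list_of_multiset by auto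
  ultimately show ?thesis unfolding sparse_lists_def g by simp
qed

lemma inj_on_to_sparse: "inj_on (to_sparse n) (pair_parts n m1 m2)"
proof (rule inj_onI)
  fix ps ps' assume a: "ps \<in> pair_parts n m1 m2" "ps' \<in> pair_parts n m1 m2" "to_sparse n ps = to_sparse n ps'"
  obtain \<pi> \<sigma> where ps: "ps = (\<pi>, \<sigma>)" by (cases ps)
  obtain \<pi>' \<sigma>' where ps': "ps' = (\<pi>', \<sigma>')" by (cases ps')
  define r where "r = parts_to_word n (sorted_list_of_multiset \<pi>)"
  define r' where "r' = parts_to_word n (sorted_list_of_multiset \<pi>')"
  have word: "length r = n \<and> set r \<subseteq> {0,1,2} \<and> word_to_parts r = sorted_list_of_multiset \<pi> \<and> size \<sigma> \<le> n"
    using pair_parts_word[of \<pi> \<sigma> n m1 m2] a ps unfolding r_def by simp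
  have word': "length r' = n \<and> set r' \<subseteq> {0,1,2} \<and> word_to_parts r' = sorted_list_of_multiset \<pi>' \<and> size \<sigma>' \<le> n"
    using pair_parts_word[of \<pi>' \<sigma>' n m1 m2] a ps' unfolding r'_def by simp
  have "combine r (padded n \<sigma>) = combine r' (padded n \<sigma>')" using a(3) unfolding to_sparse_def ps ps' r_def r'_def by simp
  then have e: "r = r' \<and> padded n \<sigma> = padded n \<sigma>'"
    using combine_inj[of r r' "padded n \<sigma>" "padded n \<sigma>'"] word word' length_padded by simp
  have "\<pi> = \<pi>'" using e word word' by (metis mset_sorted_list_of_multiset)
  moreover have "\<sigma> = \<sigma>'" using e mset_padded a ps ps' unfolding pair_parts_def by (metis (no_types, lifting) case_prodD mem_Collect_eq)
  ultimately show "ps = ps'" using ps ps' by simp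
qed

lemma to_sparse_surj: "l \<in> sparse_lists n m1 m2 \<Longrightarrow> l \<in> to_sparse n ` pair_parts n m1 m2"
proof -
  assume a: "l \<in> sparse_lists n m1 m2"
  have g: "sparse l" and ll: "length l = n" and sl: "sum_list l = n"
    and c2: "length (filter (\<lambda>v. v mod 3 = 1) l) = m2" and c1: "length (filter (\<lambda>v. v mod 3 = 2) l) = m1"
    using a unfolding sparse_lists_def by auto
  obtain r s where rs: "set r \<subseteq> {0,1,2}" "length r = length l" "length s = length l"
    "sorted_wrt (\<ge>) s" "combine r s = l" using sparse_combine_surj[OF g] by blast
  have parts: "sorted (word_to_parts r)" "\<forall>v\<in>set (word_to_parts r). v mod 3 \<noteq> 0"
    "sum_list (word_to_parts r) = sum_list (ascent_lift r)"
    "\<forall>c\<in>{1,2}. length (filter (\<lambda>v. v mod 3 = c) (word_to_parts r)) = length (filter (\<lambda>v. v = c) r)"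
    "parts_to_word (length r) (word_to_parts r) = r"
    using rs(1) by (simp_all add: sorted_word_to_parts word_to_parts_not_dvd sum_word_to_parts
        count_word_to_parts parts_to_word_word_to_parts)
  define \<pi> where "\<pi> = mset (word_to_parts r)"
  define \<sigma> where "\<sigma> = mset (filter (\<lambda>x. x \<noteq> 0) s)"
  have sorted_\<pi>: "sorted_list_of_multiset \<pi> = word_to_parts r" unfolding \<pi>_def using parts
    by (simp add: sorted_list_of_multiset_mset sorted_sort_id)
  have padded_\<sigma>: "padded n \<sigma> = s" unfolding \<sigma>_def using padded_mset rs ll by simp
  have image: "to_sparse n (\<pi>, \<sigma>) = l" unfolding to_sparse_def using sorted_\<pi> padded_\<sigma> parts rs ll by simp
  have lr: "length s = length r" using rs by simp
  have sum_\<sigma>: "sum_mset \<sigma> = sum_list s"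
    unfolding \<sigma>_def by (metis sum_mset_sum_list sum_list_filter_nonzero)
  have sum_\<pi>: "sum_mset \<pi> = sum_list (ascent_lift r)" unfolding \<pi>_def using parts by (simp add: sum_mset_sum_list)
  have "2 * sum_mset \<pi> + 3 * sum_mset \<sigma> = n" using sum_combine[OF lr] rs(5) sl sum_\<sigma> sum_\<pi> by simp
  moreover have "\<forall>x\<in>#\<pi>. x mod 3 \<noteq> 0" unfolding \<pi>_def using parts by simp
  moreover have "\<forall>x\<in>#\<sigma>. 0 < x" unfolding \<sigma>_def by simp
  moreover have "size (filter_mset (\<lambda>x. x mod 3 = 1) \<pi>) = m1"
    using count_combine[OF rs(1) lr] rs(5) c1 parts unfolding \<pi>_def by (metis insertI1 mset_filter size_mset)
  moreover have "size (filter_mset (\<lambda>x. x mod 3 = 2) \<pi>) = m2"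
    using count_combine[OF rs(1) lr] rs(5) c2 parts unfolding \<pi>_def by (metis insertI1 insertI2 mset_filter size_mset)
  ultimately have "(\<pi>, \<sigma>) \<in> pair_parts n m1 m2" unfolding pair_parts_def by simp
  then show ?thesis using image by (metis image_eqI)
qed

lemma card_sparse_lists: "card (sparse_lists n m1 m2) = card (pair_parts n m1 m2)"
proof -
  have "bij_betw (to_sparse n) (pair_parts n m1 m2) (sparse_lists n m1 m2)"
    unfolding bij_betw_def using inj_on_to_sparse to_sparse_in to_sparse_surj by blast
  then show ?thesis by (metis bij_betw_same_card)
qed

section \<open>Parts divisible by 2 or 3\<close>

definition B1_set :: "nat \<Rightarrow> nat \<Rightarrow> nat \<Rightarrow> nat multiset set" where
  "B1_set n m1 m2 = {p \<in> partitions n.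
      (\<forall>x\<in>#p. x mod 6 \<in> {0, 2, 3, 4}) \<and>
      nparts_mod 2 6 p = m1 \<and> nparts_mod 4 6 p = m2}"

definition join_parts :: "nat multiset \<times> nat multiset \<Rightarrow> nat multiset" where
  "join_parts ps = image_mset (\<lambda>x. 2*x) (fst ps) + image_mset (\<lambda>x. 3*x) (snd ps)"

definition split_parts :: "nat multiset \<Rightarrow> nat multiset \<times> nat multiset" where
  "split_parts p = (image_mset (\<lambda>x. x div 2) (filter_mset (\<lambda>x. x mod 3 \<noteq> 0) p),
                    image_mset (\<lambda>x. x div 3) (filter_mset (\<lambda>x. x mod 3 = 0) p))"

lemma image_mset_id_on: "(\<And>x. x \<in># M \<Longrightarrow> f x = x) \<Longrightarrow> image_mset f M = M"
  using image_mset_cong[of M f "\<lambda>x. x"] by simp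

lemma filter_mset_all: "(\<And>x. x \<in># M \<Longrightarrow> P x) \<Longrightarrow> filter_mset P M = M"
  using filter_mset_cong[of M M P "\<lambda>_. True"] by simp

lemma sum_mset_image_mult: "sum_mset (image_mset (\<lambda>x. c * x) M) = c * sum_mset (M::nat multiset)"
  by (induction M) (auto simp: algebra_simps)

lemma join_split_parts:
  assumes "\<forall>x\<in>#p. x mod 6 \<in> {0, 2, 3, 4}"
  shows "join_parts (split_parts p) = p"
proof -
  have halves: "2 * (x div 2) = x" if "x mod 6 \<in> {0, 2, 3, 4}" "x mod 3 \<noteq> 0" for x :: nat
    using that by (simp only: insert_iff empty_iff) presburger
  have thirds: "3 * (x div 3) = x" if "x mod 3 = 0" for x :: nat
    using that by presburger
  have "join_parts (split_parts p) =
      image_mset (\<lambda>x. 2 * (x div 2)) (filter_mset (\<lambda>x. x mod 3 \<noteq> 0) p) +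
      image_mset (\<lambda>x. 3 * (x div 3)) (filter_mset (\<lambda>x. \<not> x mod 3 \<noteq> 0) p)"
    by (simp add: join_parts_def split_parts_def multiset.map_comp comp_def)
  also have "\<dots> = filter_mset (\<lambda>x. x mod 3 \<noteq> 0) p + filter_mset (\<lambda>x. \<not> x mod 3 \<noteq> 0) p"
    using assms halves thirds by (intro arg_cong2[where f = "(+)"] image_mset_id_on) auto
  finally show ?thesis using multiset_partition[of p "\<lambda>x. x mod 3 \<noteq> 0"] by simp
qed

lemma split_join_parts:
  assumes "\<forall>x\<in>#\<pi>. x mod 3 \<noteq> 0"
  shows "split_parts (join_parts (\<pi>, \<sigma>)) = (\<pi>, \<sigma>)"
proof -
  have "(2 * x) mod 3 \<noteq> 0 \<longleftrightarrow> x mod 3 \<noteq> 0" for x :: nat by presburger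
  then show ?thesis
    using assms by (auto simp: split_parts_def join_parts_def filter_mset_image_mset
        multiset.map_comp comp_def intro!: filter_mset_all)
qed

lemma join_parts_in_B1_set_iff:
  assumes "\<forall>x\<in>#\<pi>. x mod 3 \<noteq> 0"
  shows "join_parts (\<pi>, \<sigma>) \<in> B1_set n m1 m2 \<longleftrightarrow> (\<pi>, \<sigma>) \<in> pair_parts n m1 m2"
proof -
  have mod6: "(2 * y) mod 6 = 0 \<or> (2 * y) mod 6 = 2 \<or> (2 * y) mod 6 = 4"
    "(3 * y) mod 6 = 0 \<or> (3 * y) mod 6 = 3" for y :: nat
    by presburger+
  have residues: "\<forall>x\<in>#join_parts (\<pi>, \<sigma>). x mod 6 \<in> {0, 2, 3, 4}"
  proof
    fix x assume "x \<in># join_parts (\<pi>, \<sigma>)"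
    then consider y where "x = 2 * y" | y where "x = 3 * y" by (auto simp: join_parts_def)
    then show "x mod 6 \<in> {0, 2, 3, 4}"
    proof cases
      case (1 y) then show ?thesis using mod6(1)[of y] by auto
    next
      case (2 y) then show ?thesis using mod6(2)[of y] by auto
    qed
  qed
  have positive: "(\<forall>x\<in>#join_parts (\<pi>, \<sigma>). 0 < x) \<longleftrightarrow> (\<forall>x\<in>#\<sigma>. 0 < x)"
    using assms by (auto simp: join_parts_def)
  have sum: "sum_mset (join_parts (\<pi>, \<sigma>)) = 2 * sum_mset \<pi> + 3 * sum_mset \<sigma>"
    by (simp add: join_parts_def sum_mset_image_mult)
  have "(2 * x) mod 6 = 2 \<longleftrightarrow> x mod 3 = 1" "(2 * x) mod 6 = 4 \<longleftrightarrow> x mod 3 = 2"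
    "(3 * x) mod 6 \<noteq> 2" "(3 * x) mod 6 \<noteq> 4" for x :: nat
    by presburger+
  then have counts: "nparts_mod 2 6 (join_parts (\<pi>, \<sigma>)) = size (filter_mset (\<lambda>x. x mod 3 = 1) \<pi>)"
    "nparts_mod 4 6 (join_parts (\<pi>, \<sigma>)) = size (filter_mset (\<lambda>x. x mod 3 = 2) \<pi>)"
    by (simp_all add: nparts_mod_def join_parts_def filter_mset_image_mset)
  show ?thesis
    using assms residues positive sum counts
    by (auto simp: B1_set_def partitions_def pair_parts_def)
qed

lemma card_B1_set: "card (B1_set n m1 m2) = card (pair_parts n m1 m2)"
proof -
  have "inj_on join_parts (pair_parts n m1 m2)"
    by (rule inj_on_inverseI[where g = split_parts]) (auto simp: pair_parts_def split_join_parts)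
  moreover have "join_parts ` pair_parts n m1 m2 = B1_set n m1 m2"
  proof
    show "join_parts ` pair_parts n m1 m2 \<subseteq> B1_set n m1 m2"
      using join_parts_in_B1_set_iff by (auto simp: pair_parts_def)
  next
    show "B1_set n m1 m2 \<subseteq> join_parts ` pair_parts n m1 m2"
    proof
      fix p assume p: "p \<in> B1_set n m1 m2"
      then have residues: "\<forall>x\<in>#p. x mod 6 \<in> {0, 2, 3, 4}" by (simp add: B1_set_def)
      obtain \<pi> \<sigma> where split: "split_parts p = (\<pi>, \<sigma>)" by (cases "split_parts p")
      have "(x div 2) mod 3 \<noteq> 0" if "x mod 6 \<in> {0, 2, 3, 4}" "x mod 3 \<noteq> 0" for x :: nat
        using that by (simp only: insert_iff empty_iff) presburger
      then have "\<forall>x\<in>#\<pi>. x mod 3 \<noteq> 0"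
        using split residues by (auto simp: split_parts_def)
      moreover have "p = join_parts (\<pi>, \<sigma>)" using join_split_parts[OF residues] split by simp
      ultimately show "p \<in> join_parts ` pair_parts n m1 m2"
        using p join_parts_in_B1_set_iff by blast
    qed
  qed
  ultimately show ?thesis by (metis card_image)
qed

theorem theorem3p1:
  fixes n m1 m2 :: nat
  shows "B1 m1 m2 n = B2 m1 m2 n"
proof -
  have "B1 m1 m2 n = card (B1_set n m1 m2)" unfolding B1_def B1_set_def by simp
  also have "\<dots> = card (pair_parts n m1 m2)" by (rule card_B1_set)
  also have "\<dots> = card (sparse_lists n m1 m2)" by (rule card_sparse_lists[symmetric])
  also have "\<dots> = card (B2_set n m1 m2)" by (rule card_B2_set[symmetric])
  also have "\<dots> = B2 m1 m2 n" unfolding B2_def B2_set_def by simp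
  finally show ?thesis .
qed

end
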